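(* Let $k\ge2$, $n>2^k$ and $c=2^k-2$. For every $v\in V\setminus\{1\}$ there exists a search strategy $T_v\in\mathcal{T}_k$ with $$C(T_v)=\begin{cases}[v\oplus(c+1)]&\text{if }\{0,n-1\}\cap[v\oplus(c+1)]\neq\emptyset,\\ [v\oplus c]&\text{otherwise.}\end{cases}$$
   Context: $G$ is the path graph with $V=\{0,\dots,n-1\}$ and edges $\{v,v+1\}$. A search strategy for a tree $H$ is a rooted binary tree defined recursively: a single node is a search strategy for any $H$; otherwise the root is labeled with an edge $uv$ of $H$ and its two child subtrees are search strategies for the components $H_u,H_v$ of $H-uv$ containing $u,v$. Nodes get vertex sets: the root gets $V(H)$, the children of a root labeled $uv$ get $V(H_u),V(H_v)$, recursively. $C(T)$ is the set of $v$ with $V(\lambda)=\{v\}$ for a leaf $\lambda$. $\mathcal{T}_k$ is the set of search strategies for $G$ of height at most $k$. $[u\oplus\ell]=\{w\bmod n: u\le w\le u+\ell-1\}$. *)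

theory Defs
  imports Main
begin

text \<open>Search strategies for the path graph G on V = {0..n-1} with edges {v,v+1}.
Every subgraph H arising in the recursion is a subpath with vertex set {a..b}.
A node labelled e stands for the edge {e, e+1}; its left child is a strategy
for the component {a..e} (containing e), its right child for {e+1..b}
(containing e+1).\<close>

datatype stree = Leaf | Node nat stree stree

fun is_strategy :: "nat \<Rightarrow> nat \<Rightarrow> stree \<Rightarrow> bool" where
  "is_strategy a b Leaf = True"
| "is_strategy a b (Node e l r) =
     (a \<le> e \<and> e < b \<and> is_strategy a e l \<and> is_strategy (Suc e) b r)"

fun leaf_sets :: "nat \<Rightarrow> nat \<Rightarrow> stree \<Rightarrow> nat set set" where
  "leaf_sets a b Leaf = {{a..b}}"
| "leaf_sets a b (Node e l r) = leaf_sets a e l \<union> leaf_sets (Suc e) b r"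

fun height :: "stree \<Rightarrow> nat" where
  "height Leaf = 0"
| "height (Node e l r) = Suc (max (height l) (height r))"

definition C_set :: "nat \<Rightarrow> stree \<Rightarrow> nat set" where
  "C_set n T = {v. {v} \<in> leaf_sets 0 (n - 1) T}"

definition strategies :: "nat \<Rightarrow> nat \<Rightarrow> stree set" where
  "strategies n k = {T. is_strategy 0 (n - 1) T \<and> height T \<le> k}"

definition cyc_int :: "nat \<Rightarrow> nat \<Rightarrow> nat \<Rightarrow> nat set" where
  "cyc_int n u l = {w mod n | w. u \<le> w \<and> w < u + l}"

end

theory Submission
  imports Defs
begin

text \<open>A strategy that always cuts the median of the edges still to be cut removes any set E
of edges with card E < 2^h in height at most h, and its singleton leaves are exactly the
vertices all of whose incident path edges lie in E. A cyclic interval containing 0 or n - 1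
is therefore isolated by its c + 1 incident path edges, and an interval of length c inside
the path also by c + 1 edges. The hypothesis v \<noteq> 1 rules out that vertex 0 gets isolated
as well; for v + c = n - 1 the vertex n - 1 does get isolated, which is why the interval
then has length c + 1.\<close>

definition isolated_vertices :: "nat \<Rightarrow> nat \<Rightarrow> nat set \<Rightarrow> nat set" where
  "isolated_vertices a b E =
     {v. a \<le> v \<and> v \<le> b \<and> (v = a \<or> v - 1 \<in> E) \<and> (v = b \<or> v \<in> E)}"

lemma isolated_vertices_empty: "isolated_vertices a b {} = {v. {v} = {a..b}}"
  by (auto simp: isolated_vertices_def) (metis atLeastAtMost_singleton_iff)+

lemma isolated_vertices_cut:
  assumes "a \<le> e" "e < b" "EL \<subseteq> {a..<e}" "ER \<subseteq> {Suc e..<b}"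
  shows "isolated_vertices a b (EL \<union> {e} \<union> ER) =
           isolated_vertices a e EL \<union> isolated_vertices (Suc e) b ER"
  using assms unfolding isolated_vertices_def subset_iff atLeastLessThan_iff
  by (auto; force)

lemma median_split:
  fixes E :: "'a::linorder set"
  assumes "finite E" "E \<noteq> {}"
  obtains EL e ER where "E = EL \<union> {e} \<union> ER" "\<forall>x\<in>EL. x < e" "\<forall>x\<in>ER. e < x"
    "2 * card EL \<le> card E" "2 * card ER < card E"
proof -
  define xs where "xs = sorted_list_of_set E"
  define i where "i = length xs div 2"
  have xs: "sorted_wrt (<) xs" "length xs = card E" "set xs = E"
    using assms by (auto simp: xs_def)
  then have "i < length xs"
    using assms by (simp add: i_def card_gt_0_iff)
  then have split: "xs = take i xs @ xs ! i # drop (Suc i) xs"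
    by (simp add: id_take_nth_drop)
  then have sorted: "sorted_wrt (<) (take i xs @ xs ! i # drop (Suc i) xs)"
    using xs(1) by simp
  show ?thesis
  proof (rule that[of "set (take i xs)" "xs ! i" "set (drop (Suc i) xs)"])
    show "E = set (take i xs) \<union> {xs ! i} \<union> set (drop (Suc i) xs)"
      using xs(3) split by (metis Un_insert_right insert_is_Un list.set(2) set_append sup_assoc)
    show "\<forall>x\<in>set (take i xs). x < xs ! i" "\<forall>x\<in>set (drop (Suc i) xs). xs ! i < x"
      using sorted by (simp_all add: sorted_wrt_append)
    show "2 * card (set (take i xs)) \<le> card E" "2 * card (set (drop (Suc i) xs)) < card E"
      using card_length[of "take i xs"] card_length[of "drop (Suc i) xs"] xs(2) \<open>i < length xs\<close>
      by (auto simp: i_def)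
  qed
qed

lemma strategy_cutting_edges:
  assumes "E \<subseteq> {a..<b}" "card E < 2 ^ h"
  shows "\<exists>T. is_strategy a b T \<and> height T \<le> h \<and>
             {v. {v} \<in> leaf_sets a b T} = isolated_vertices a b E"
  using assms
proof (induction h arbitrary: a b E)
  case 0
  then have "E = {}"
    using finite_subset by fastforce
  then show ?case
    by (intro exI[of _ Leaf]) (simp add: isolated_vertices_empty)
next
  case (Suc h)
  show ?case
  proof (cases "E = {}")
    case True
    then show ?thesis
      by (intro exI[of _ Leaf]) (simp add: isolated_vertices_empty)
  next
    case False
    obtain EL e ER where E: "E = EL \<union> {e} \<union> ER" and "\<forall>x\<in>EL. x < e" "\<forall>x\<in>ER. e < x"
      and card: "2 * card EL \<le> card E" "2 * card ER < card E"
      using median_split[OF finite_subset[OF Suc.prems(1)] False] by blast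
    then have e: "a \<le> e" "e < b" and EL: "EL \<subseteq> {a..<e}" and ER: "ER \<subseteq> {Suc e..<b}"
      using Suc.prems(1) by (auto simp: subset_iff Suc_le_eq)
    have "card EL < 2 ^ h" "card ER < 2 ^ h"
      using Suc.prems(2) card by auto
    then obtain l r where
      l: "is_strategy a e l" "height l \<le> h" "{v. {v} \<in> leaf_sets a e l} = isolated_vertices a e EL" and
      r: "is_strategy (Suc e) b r" "height r \<le> h"
         "{v. {v} \<in> leaf_sets (Suc e) b r} = isolated_vertices (Suc e) b ER"
      using Suc.IH EL ER by meson
    show ?thesis
    proof (intro exI[of _ "Node e l r"] conjI)
      show "is_strategy a b (Node e l r)" "height (Node e l r) \<le> Suc h"
        using l r e by simp_all
      show "{v. {v} \<in> leaf_sets a b (Node e l r)} = isolated_vertices a b E"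
        using l(3) r(3) unfolding E isolated_vertices_cut[OF e EL ER] by auto
    qed
  qed
qed

lemma strategies_cutting_edges:
  assumes "E \<subseteq> {..<n - 1}" "card E < 2 ^ k"
  shows "\<exists>T \<in> strategies n k. C_set n T = isolated_vertices 0 (n - 1) E"
  using strategy_cutting_edges[of E 0 "n - 1" k] assms
  by (auto simp: strategies_def C_set_def lessThan_atLeast0)

lemma strategies_cutting_edges_end_segments:
  assumes "p + q + 2 \<le> n" "p + q < 2 ^ k"
  shows "\<exists>T \<in> strategies n k. C_set n T = {..<q} \<union> {n - p..<n}"
proof -
  define E where "E = {..<q} \<union> {n - p - 1..<n - 1}"
  have "card E = q + p"
    unfolding E_def using assms(1) by (subst card_Un_disjoint) auto
  moreover have "isolated_vertices 0 (n - 1) E = {..<q} \<union> {n - p..<n}"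
    using assms(1) unfolding E_def isolated_vertices_def by auto
  moreover have "E \<subseteq> {..<n - 1}"
    unfolding E_def using assms(1) by auto
  ultimately show ?thesis
    using strategies_cutting_edges assms(2) by (metis add.commute)
qed

lemma strategies_cutting_edges_interior_interval:
  assumes "1 < v" "v + l + 1 < n" "l + 1 < 2 ^ k"
  shows "\<exists>T \<in> strategies n k. C_set n T = {v..<v + l}"
proof -
  have "isolated_vertices 0 (n - 1) {v - 1..<v + l} = {v..<v + l}"
    using assms(1,2) unfolding isolated_vertices_def by auto
  then show ?thesis
    using strategies_cutting_edges[of "{v - 1..<v + l}" n k] assms by fastforce
qed

lemma cyc_int_eq_intervals:
  assumes "v < n" "l \<le> n"
  shows "cyc_int n v l = {v..<min (v + l) n} \<union> {..<v + l - n}"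
proof (intro set_eqI iffI)
  fix x
  assume "x \<in> cyc_int n v l"
  then obtain w where "v \<le> w" "w < v + l" "x = w mod n"
    by (auto simp: cyc_int_def)
  then show "x \<in> {v..<min (v + l) n} \<union> {..<v + l - n}"
    using assms by (cases "w < n") (auto simp: le_mod_geq)
next
  fix x
  assume "x \<in> {v..<min (v + l) n} \<union> {..<v + l - n}"
  then consider "v \<le> x" "x < v + l" "x < n" | "x + n < v + l"
    by fastforce
  then show "x \<in> cyc_int n v l"
  proof cases
    case 1
    then show ?thesis
      unfolding cyc_int_def by (intro CollectI exI[of _ x]) simp
  next
    case 2
    then show ?thesis
      unfolding cyc_int_def using assms by (intro CollectI exI[of _ "x + n"]) auto
  qed
qed

theorem corollary3p1:
  fixes n k c v :: nat
  assumes "k \<ge> 2" and "n > 2 ^ k" and "c = 2 ^ k - 2"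
    and "v \<in> {0..<n} - {1}"
  shows "\<exists>T \<in> strategies n k.
           C_set n T = (if {0, n - 1} \<inter> cyc_int n v (c + 1) \<noteq> {}
                        then cyc_int n v (c + 1) else cyc_int n v c)"
proof -
  have "2 ^ 2 \<le> (2::nat) ^ k"
    using assms(1) by (rule power_increasing) simp
  then have c: "c + 2 = 2 ^ k" "c + 3 \<le> n"
    using assms(2,3) by auto
  have v: "v < n" "v \<noteq> 1"
    using assms(4) by auto
  have cyc: "cyc_int n v l = {v..<min (v + l) n} \<union> {..<v + l - n}" if "l \<le> n" for l
    using cyc_int_eq_intervals[OF v(1) that] .
  consider (initial) "v = 0" | (final) "1 < v" "n \<le> v + c + 1" | (interior) "1 < v" "v + c + 1 < n"
    using v by linarith
  then show ?thesis
  proof cases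
    case initial
    then have "cyc_int n v (c + 1) = {..<c + 1} \<union> {n - 0..<n}"
      using cyc c by auto
    then show ?thesis
      using strategies_cutting_edges_end_segments[of 0 "c + 1" n k] c by auto
  next
    case final
    then have "cyc_int n v (c + 1) = {..<v + c + 1 - n} \<union> {n - (n - v)..<n}"
      using cyc c by auto
    then show ?thesis
      using strategies_cutting_edges_end_segments[of "n - v" "v + c + 1 - n" n k] c final v(1)
      by auto
  next
    case interior
    then have "cyc_int n v (c + 1) = {v..<v + c + 1}" "cyc_int n v c = {v..<v + c}"
      using cyc c by auto
    then show ?thesis
      using strategies_cutting_edges_interior_interval[of v c n k] c interior by auto
  qed
qed

end
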